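(* Let $\mathbb K$ be a field of characteristic $\ne2$, $D\in\mathbb K[X]$ non-square of even degree with leading coefficient a square, and $\sqrt D\in\mathbb K((X^{-1}))$ fixed. Let $\alpha\in\mathbb K(X,\sqrt D)\subset\mathbb K((X^{-1}))$ be $\sigma$-reduced with $\alpha+\sigma(\alpha)\in\mathbb K[X]$. If the continued fraction of $\alpha$ is quasi-periodic, then it is pure periodic, i.e. there is $l\ge1$ with $a_n=a_{n+l}$ for all $n\ge0$.
   Context: $\operatorname{ord}$ is the valuation on $\mathbb K((X^{-1}))$ with $\operatorname{ord}(\sum_{n\le N}t_nX^n)=-N$ if $t_N\ne0$; $\lfloor\beta\rfloor$ is the unique polynomial with $\operatorname{ord}(\beta-\lfloor\beta\rfloor)>0$. Continued fraction: $\alpha_0=\alpha$, $\alpha_{n+1}=1/(\alpha_n-\lfloor\alpha_n\rfloor)$, $a_n=\lfloor\alpha_n\rfloor$. $\sigma$ is the nontrivial $\mathbb K(X)$-automorphism of $\mathbb K(X,\sqrt D)$, $\sigma(\sqrt D)=-\sqrt D$. An element $\alpha\in\mathbb K(X,\sqrt D)$ is $\sigma$-reduced if $\operatorname{ord}(\sigma(\alpha))>0>\operatorname{ord}(\alpha)$. Quasi-periodic: there exist $m\ge0$, $l\ge1$, $\mu\in\mathbb K^*$ with $a_n=\mu^{(-1)^n}a_{n+l}$ for all $n\ge m$. *)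

theory Defs
  imports "HOL-Computational_Algebra.Polynomial" "HOL-Computational_Algebra.Formal_Laurent_Series"
begin

text \<open>Model of K((X^-1)): the type 'a fls of formal Laurent series in a variable T
  (finitely many negative powers of T), with T playing the role of X^-1.
  Thus the polynomial variable X is fls_X_inv, and ord is fls_subdegree.\<close>

definition poly_fls :: "'a::field poly \<Rightarrow> 'a fls" where
  "poly_fls p = poly (map_poly fls_const p) fls_X_inv"

definition polys_fls :: "'a::field fls set" where
  "polys_fls = range poly_fls"

definition ratfun_fls :: "'a::field fls set" where
  "ratfun_fls = {poly_fls p / poly_fls q | p q. q \<noteq> 0}"

definition ord_pos :: "'a::field fls \<Rightarrow> bool" where
  "ord_pos f \<longleftrightarrow> f = 0 \<or> 0 < fls_subdegree f"

definition ord_neg :: "'a::field fls \<Rightarrow> bool" where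
  "ord_neg f \<longleftrightarrow> f \<noteq> 0 \<and> fls_subdegree f < 0"

text \<open>K(X, sqrt D), where s is the fixed square root of D\<close>
definition quad_field :: "'a::field fls \<Rightarrow> 'a fls set" where
  "quad_field s = {a + b * s | a b. a \<in> ratfun_fls \<and> b \<in> ratfun_fls}"

definition sigma :: "'a::field fls \<Rightarrow> 'a fls \<Rightarrow> 'a fls" where
  "sigma s \<alpha> = (THE \<beta>. \<exists>a\<in>ratfun_fls. \<exists>b\<in>ratfun_fls. \<alpha> = a + b * s \<and> \<beta> = a - b * s)"

definition sigma_reduced :: "'a::field fls \<Rightarrow> 'a fls \<Rightarrow> bool" where
  "sigma_reduced s \<alpha> \<longleftrightarrow> ord_pos (sigma s \<alpha>) \<and> ord_neg \<alpha>"

definition fls_floor :: "'a::field fls \<Rightarrow> 'a fls" where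
  "fls_floor f = (THE g. g \<in> polys_fls \<and> ord_pos (f - g))"

primrec cf_alpha :: "'a::field fls \<Rightarrow> nat \<Rightarrow> 'a fls" where
  "cf_alpha \<alpha> 0 = \<alpha>"
| "cf_alpha \<alpha> (Suc n) = inverse (cf_alpha \<alpha> n - fls_floor (cf_alpha \<alpha> n))"

definition cf_a :: "'a::field fls \<Rightarrow> nat \<Rightarrow> 'a fls" where
  "cf_a \<alpha> n = fls_floor (cf_alpha \<alpha> n)"

definition quasi_periodic :: "'a::field fls \<Rightarrow> bool" where
  "quasi_periodic \<alpha> \<longleftrightarrow> (\<exists>m l (\<mu>::'a). l \<ge> 1 \<and> \<mu> \<noteq> 0 \<and>
     (\<forall>n\<ge>m. cf_a \<alpha> n = fls_const (\<mu> powi ((-1) ^ n)) * cf_a \<alpha> (n + l)))"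

end

theory Submission
  imports Defs
begin

text \<open>All complete quotients \<alpha>_n of a \<sigma>-reduced \<alpha> are again \<sigma>-reduced, so
  \<beta>_n = -1/\<sigma>(\<alpha>_n) satisfies \<beta>_(n+1) = a_n + 1/\<beta>_n with polynomial part a_n: it is the
  continued fraction read backwards. If a_n = \<mu>^((-1)^n) a_(n+l) for n \<ge> m, then
  \<alpha>_n = \<mu>^((-1)^n) \<alpha>_(n+l) for n \<ge> m, because two expansions with the same partial
  quotients and complete quotients of bounded order coincide; the backward recurrence carries this
  relation down to n = 0. For odd l the factors cancel over two quasi-periods. For even l, the
  trace condition gives \<alpha>_1 = \<beta>_0, so the expansion is symmetric within a quasi-period,
  \<beta>_(l-j) = \<mu>^((-1)^j) \<alpha>_(j+1); taking polynomial parts at j = l/2 - 1 gives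
  a_(l/2) = \<mu>^(\<plusminus>1) a_(l/2), hence \<mu> = 1.\<close>

subsection \<open>Polynomials as Laurent series in \<open>X\<^sup>-\<^sup>1\<close>\<close>

lemma poly_fls_pCons: "poly_fls (pCons a p) = fls_const a + fls_X_inv * poly_fls p"
  unfolding poly_fls_def by (simp add: map_poly_pCons)

lemma poly_fls_nth: "fls_nth (poly_fls p) n = (if n \<le> 0 then coeff p (nat (- n)) else 0)"
proof (induction p arbitrary: n)
  case 0
  then show ?case by (simp add: poly_fls_def)
next
  case (pCons a p)
  show ?case
    by (auto simp: poly_fls_pCons fls_X_inv_times_conv_shift pCons.IH coeff_pCons
        split: nat.splits) (auto simp: nat_diff_distrib' nat_add_distrib)
qed

lemma poly_fls_0 [simp]: "poly_fls 0 = 0"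
  by (rule fls_eqI) (simp add: poly_fls_nth)

lemma poly_fls_const: "poly_fls [:c:] = fls_const c"
  by (rule fls_eqI) (auto simp: poly_fls_nth coeff_pCons split: nat.splits)

lemma poly_fls_1 [simp]: "poly_fls 1 = 1"
  using poly_fls_const[of 1] by (simp add: one_pCons)

lemma poly_fls_add: "poly_fls (p + q) = poly_fls p + poly_fls q"
  by (rule fls_eqI) (simp add: poly_fls_nth)

lemma poly_fls_smult: "poly_fls (smult c q) = fls_const c * poly_fls q"
  by (rule fls_eqI) (simp add: poly_fls_nth)

lemma poly_fls_mult: "poly_fls (p * q) = poly_fls p * poly_fls q"
proof (induction p)
  case (pCons a p)
  show ?case
    by (simp add: mult_pCons_left poly_fls_add poly_fls_smult pCons.IH poly_fls_pCons
        algebra_simps)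
qed simp

lemma poly_fls_inject: "poly_fls p = poly_fls q \<longleftrightarrow> p = q"
proof
  assume eq: "poly_fls p = poly_fls q"
  show "p = q"
  proof (rule poly_eqI)
    fix n
    have "fls_nth (poly_fls p) (- int n) = fls_nth (poly_fls q) (- int n)"
      using eq by simp
    then show "coeff p n = coeff q n" by (simp add: poly_fls_nth)
  qed
qed simp

lemma poly_fls_eq_0_iff: "poly_fls p = 0 \<longleftrightarrow> p = 0"
  using poly_fls_inject[of p 0] by simp

lemma mem_polys_fls_iff: "f \<in> polys_fls \<longleftrightarrow> (\<forall>n>0. fls_nth f n = 0)"
proof
  assume "f \<in> polys_fls"
  then show "\<forall>n>0. fls_nth f n = 0"
    by (auto simp: polys_fls_def poly_fls_nth)
next
  assume high: "\<forall>n>0. fls_nth f n = 0"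
  have "f = poly_fls (fls_prpart f + [:fls_nth f 0:])"
    by (rule fls_eqI) (use high in \<open>auto simp: poly_fls_nth coeff_pCons split: nat.splits\<close>)
  then show "f \<in> polys_fls" unfolding polys_fls_def by blast
qed

lemma ord_pos_iff: "ord_pos f \<longleftrightarrow> (\<forall>n\<le>0. fls_nth f n = 0)"
proof
  assume "\<forall>n\<le>0. fls_nth f n = 0"
  moreover have "f \<noteq> 0 \<Longrightarrow> fls_nth f (fls_subdegree f) \<noteq> 0" by simp
  ultimately show "ord_pos f" unfolding ord_pos_def by force
qed (auto simp: ord_pos_def)

lemma ord_neg_iff: "ord_neg f \<longleftrightarrow> (\<exists>n<0. fls_nth f n \<noteq> 0)"
proof
  assume "\<exists>n<0. fls_nth f n \<noteq> 0"
  then obtain n where "n < 0" "fls_nth f n \<noteq> 0" by blast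
  then show "ord_neg f"
    unfolding ord_neg_def using fls_subdegree_leI[of f n] by auto
qed (auto simp: ord_neg_def intro: exI[of _ "fls_subdegree f"])

lemma ord_neg_imp_nonzero: "ord_neg f \<Longrightarrow> f \<noteq> 0"
  by (simp add: ord_neg_def)

lemma ord_pos_not_neg: "ord_pos f \<Longrightarrow> \<not> ord_neg f"
  by (auto simp: ord_neg_def ord_pos_def)

lemma ord_neg_diff_ord_pos: "ord_neg f \<Longrightarrow> ord_pos g \<Longrightarrow> ord_neg (g - f)"
  by (auto simp: ord_neg_iff ord_pos_iff)

lemma ord_pos_inverse: "ord_neg f \<Longrightarrow> ord_pos (inverse f)"
  by (simp add: ord_neg_def ord_pos_def)

lemma ord_neg_inverse: "ord_pos f \<Longrightarrow> f \<noteq> 0 \<Longrightarrow> ord_neg (inverse f)"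
  by (simp add: ord_neg_def ord_pos_def)

lemma fls_subdegree_const_mult:
  "(c::'a::field) \<noteq> 0 \<Longrightarrow> fls_subdegree (fls_const c * f) = fls_subdegree f"
  by (cases "f = 0") (simp_all add: fls_subdegree_mult)

lemma fls_floor_nth: "fls_nth (fls_floor f) n = (if n \<le> 0 then fls_nth f n else 0)"
proof -
  define g where "g = poly_fls (fls_prpart f + [:fls_nth f 0:])"
  have g_nth: "fls_nth g n = (if n \<le> 0 then fls_nth f n else 0)" for n
    by (auto simp: g_def poly_fls_nth coeff_pCons split: nat.splits)
  have "fls_floor f = g"
    unfolding fls_floor_def
  proof (rule the_equality)
    show "g \<in> polys_fls \<and> ord_pos (f - g)"
      by (auto simp: mem_polys_fls_iff ord_pos_iff g_nth)
  next
    fix h assume h: "h \<in> polys_fls \<and> ord_pos (f - h)"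
    show "h = g"
      by (rule fls_eqI) (use h in \<open>auto simp: mem_polys_fls_iff ord_pos_iff g_nth\<close>)
  qed
  then show ?thesis by (simp add: g_nth)
qed

lemma fls_floor_diff: "fls_floor (f - g) = fls_floor f - fls_floor g"
  by (rule fls_eqI) (simp add: fls_floor_nth)

lemma fls_floor_const_mult: "fls_floor (fls_const c * f) = fls_const c * fls_floor f"
  by (rule fls_eqI) (simp add: fls_floor_nth)

lemma fls_floor_polys: "p \<in> polys_fls \<Longrightarrow> fls_floor p = p"
  by (rule fls_eqI) (simp add: fls_floor_nth mem_polys_fls_iff)

lemma fls_floor_eq_0: "ord_pos f \<Longrightarrow> fls_floor f = 0"
  by (rule fls_eqI) (simp add: fls_floor_nth ord_pos_iff)

lemma fls_floor_in_polys: "fls_floor f \<in> polys_fls"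
  by (simp add: fls_floor_nth mem_polys_fls_iff)

lemma ord_pos_minus_fls_floor: "ord_pos (f - fls_floor f)"
  by (simp add: fls_floor_nth ord_pos_iff)

lemma ord_neg_fls_floor: "ord_neg f \<Longrightarrow> ord_neg (fls_floor f)"
  by (auto simp: fls_floor_nth ord_neg_iff)

lemma fls_subdegree_fls_floor:
  assumes "ord_neg f"
  shows "fls_subdegree (fls_floor f) = fls_subdegree f"
proof (rule antisym)
  have neg: "fls_subdegree f < 0" "f \<noteq> 0" using assms by (auto simp: ord_neg_def)
  then show "fls_subdegree (fls_floor f) \<le> fls_subdegree f"
    by (intro fls_subdegree_leI) (simp add: fls_floor_nth)
  show "fls_subdegree f \<le> fls_subdegree (fls_floor f)"
    using ord_neg_imp_nonzero[OF ord_neg_fls_floor[OF assms]]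
    by (intro fls_subdegree_geI) (auto simp: fls_floor_nth)
qed

lemma ratfun_fls_poly: "poly_fls p \<in> ratfun_fls"
  unfolding ratfun_fls_def by (rule CollectI, rule exI[of _ p], rule exI[of _ 1]) simp

lemma ratfun_fls_const: "fls_const c \<in> ratfun_fls"
  using ratfun_fls_poly[of "[:c:]"] by (simp add: poly_fls_const)

lemma polys_fls_subset_ratfun_fls: "polys_fls \<subseteq> ratfun_fls"
  using ratfun_fls_poly unfolding polys_fls_def by blast

lemma ratfun_flsE:
  assumes "f \<in> ratfun_fls"
  obtains p q where "q \<noteq> 0" "f = poly_fls p / poly_fls q"
  using assms unfolding ratfun_fls_def by blast

lemma ratfun_flsI: "q \<noteq> 0 \<Longrightarrow> poly_fls p / poly_fls q \<in> ratfun_fls"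
  unfolding ratfun_fls_def by blast

lemma ratfun_fls_add:
  assumes "f \<in> ratfun_fls" "g \<in> ratfun_fls" shows "f + g \<in> ratfun_fls"
proof -
  obtain p q where f: "q \<noteq> 0" "f = poly_fls p / poly_fls q"
    using assms(1) by (rule ratfun_flsE)
  obtain p' q' where g: "q' \<noteq> 0" "g = poly_fls p' / poly_fls q'"
    using assms(2) by (rule ratfun_flsE)
  have "f + g = poly_fls (p * q' + p' * q) / poly_fls (q * q')"
    using f g by (simp add: poly_fls_add poly_fls_mult poly_fls_eq_0_iff field_simps)
  then show ?thesis using f g ratfun_flsI[of "q * q'"] by simp
qed

lemma ratfun_fls_mult:
  assumes "f \<in> ratfun_fls" "g \<in> ratfun_fls" shows "f * g \<in> ratfun_fls"
proof -
  obtain p q where f: "q \<noteq> 0" "f = poly_fls p / poly_fls q"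
    using assms(1) by (rule ratfun_flsE)
  obtain p' q' where g: "q' \<noteq> 0" "g = poly_fls p' / poly_fls q'"
    using assms(2) by (rule ratfun_flsE)
  have "f * g = poly_fls (p * p') / poly_fls (q * q')"
    using f g by (simp add: poly_fls_mult)
  then show ?thesis using f g ratfun_flsI[of "q * q'"] by simp
qed

lemma ratfun_fls_uminus: "f \<in> ratfun_fls \<Longrightarrow> - f \<in> ratfun_fls"
  using ratfun_fls_mult[OF ratfun_fls_const[of "-1"]] by (simp add: fls_const_uminus[symmetric])

lemma ratfun_fls_diff: "f \<in> ratfun_fls \<Longrightarrow> g \<in> ratfun_fls \<Longrightarrow> f - g \<in> ratfun_fls"
  using ratfun_fls_add[of f "- g"] ratfun_fls_uminus[of g] by simp

lemma ratfun_fls_inverse: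
  assumes "f \<in> ratfun_fls" shows "inverse f \<in> ratfun_fls"
proof -
  obtain p q where f: "q \<noteq> 0" "f = poly_fls p / poly_fls q"
    using assms by (rule ratfun_flsE)
  show ?thesis
  proof (cases "p = 0")
    case True
    then show ?thesis using f ratfun_fls_const[of 0] by simp
  next
    case False
    then show ?thesis using f ratfun_flsI[of p q] by simp
  qed
qed

lemma ratfun_fls_divide: "f \<in> ratfun_fls \<Longrightarrow> g \<in> ratfun_fls \<Longrightarrow> f / g \<in> ratfun_fls"
  using ratfun_fls_mult[of f "inverse g"] ratfun_fls_inverse[of g] by (simp add: divide_inverse)

subsection \<open>Quadratic irrationals and their conjugates\<close>

text \<open>Descent on \<open>degree q\<close>: with \<open>p = q r + t\<close>, the pair \<open>(D q - p r, t)\<close> is again a solution.\<close>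

lemma poly_square_if_mult_square_eq_square:
  fixes D :: "'a::field poly"
  shows "D * (q * q) = p * p \<Longrightarrow> q \<noteq> 0 \<Longrightarrow> \<exists>r. D = r * r"
proof (induction "degree q" arbitrary: p q rule: less_induct)
  case less
  define r where "r = p div q"
  define t where "t = p mod q"
  have p: "p = q * r + t" unfolding r_def t_def by (metis div_mult_mod_eq mult.commute)
  show ?case
  proof (cases "t = 0")
    case True
    have "(q * q) * D = (q * q) * (r * r)" using less.prems p True by (simp add: algebra_simps)
    then show ?thesis using less.prems by auto
  next
    case False
    have "degree t < degree q" using degree_mod_less[of q p] less.prems False t_def by auto
    moreover have "D * (t * t) = (D * q - p * r) * (D * q - p * r)"
    proof -
      have "D * (t * t) = D * (p * p) - 2 * D * p * q * r + (D * (q * q)) * r * r"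
        using p by (simp add: algebra_simps)
      also have "\<dots> = D * (D * (q * q)) - 2 * D * p * q * r + (p * p) * r * r"
        using less.prems by simp
      finally show ?thesis by (simp add: algebra_simps)
    qed
    ultimately show ?thesis using less.hyps False by blast
  qed
qed

lemma sqrt_not_ratfun_fls:
  fixes D :: "'a::field poly"
  assumes sqrt: "s * s = poly_fls D" and nonsquare: "\<not> (\<exists>q. D = q * q)"
  shows "s \<notin> ratfun_fls"
proof
  assume "s \<in> ratfun_fls"
  then obtain p q where pq: "q \<noteq> 0" "s = poly_fls p / poly_fls q" by (rule ratfun_flsE)
  then have "s * poly_fls q = poly_fls p" by (simp add: poly_fls_eq_0_iff)
  then have "(s * s) * (poly_fls q * poly_fls q) = poly_fls p * poly_fls p"
    by (metis mult.assoc mult.left_commute)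
  then have "poly_fls (D * (q * q)) = poly_fls (p * p)"
    by (simp only: sqrt poly_fls_mult)
  then have "D * (q * q) = p * p" by (simp add: poly_fls_inject)
  then show False using poly_square_if_mult_square_eq_square pq nonsquare by blast
qed

definition quad_irrational :: "'a::field fls \<Rightarrow> 'a fls \<Rightarrow> bool" where
  "quad_irrational s x \<longleftrightarrow>
     (\<exists>a b. a \<in> ratfun_fls \<and> b \<in> ratfun_fls \<and> b \<noteq> 0 \<and> x = a + b * s)"

context
  fixes s :: "'a::field fls"
  assumes sqrt_irr: "s \<notin> ratfun_fls"
begin

lemma quad_coordinates_unique:
  assumes "a \<in> ratfun_fls" "b \<in> ratfun_fls" "a' \<in> ratfun_fls" "b' \<in> ratfun_fls"
    and eq: "a + b * s = a' + b' * s"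
  shows "a = a' \<and> b = b'"
proof (cases "b = b'")
  case False
  then have "s = (a' - a) / (b - b')" using eq by (simp add: field_simps)
  then have "s \<in> ratfun_fls" using assms by (simp add: ratfun_fls_diff ratfun_fls_divide)
  with sqrt_irr show ?thesis by blast
qed (use eq in simp)

lemma sigma_add_mult:
  assumes "a \<in> ratfun_fls" "b \<in> ratfun_fls"
  shows "sigma s (a + b * s) = a - b * s"
  unfolding sigma_def
proof (rule the_equality)
  fix \<beta>
  assume "\<exists>a'\<in>ratfun_fls. \<exists>b'\<in>ratfun_fls. a + b * s = a' + b' * s \<and> \<beta> = a' - b' * s"
  then show "\<beta> = a - b * s" using quad_coordinates_unique[OF assms] by metis
qed (use assms in blast)

lemma quad_irrational_if_sigma_reduced:
  assumes "x \<in> quad_field s" and "sigma_reduced s x"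
  shows "quad_irrational s x"
proof -
  obtain a b where ab: "a \<in> ratfun_fls" "b \<in> ratfun_fls" "x = a + b * s"
    using assms(1) unfolding quad_field_def by blast
  have "b \<noteq> 0"
  proof
    assume "b = 0"
    then have "sigma s x = x" using sigma_add_mult[OF ab(1,2)] ab(3) by simp
    then show False using assms(2) ord_pos_not_neg unfolding sigma_reduced_def by metis
  qed
  then show ?thesis unfolding quad_irrational_def using ab by blast
qed

lemma quad_irrational_not_ratfun:
  assumes "quad_irrational s x" shows "x \<notin> ratfun_fls"
proof
  assume x: "x \<in> ratfun_fls"
  obtain a b where ab: "a \<in> ratfun_fls" "b \<in> ratfun_fls" "b \<noteq> 0" "x = a + b * s"
    using assms unfolding quad_irrational_def by blast
  then have "s = (x - a) / b" by (simp add: field_simps)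
  also have "\<dots> \<in> ratfun_fls" using ab x by (intro ratfun_fls_divide ratfun_fls_diff)
  finally show False using sqrt_irr by blast
qed

lemma quad_irrational_nonzero: "quad_irrational s x \<Longrightarrow> x \<noteq> 0"
  using quad_irrational_not_ratfun ratfun_fls_const[of 0] by auto

lemma quad_irrational_sigma:
  assumes "quad_irrational s x" shows "quad_irrational s (sigma s x)"
proof -
  obtain a b where ab: "a \<in> ratfun_fls" "b \<in> ratfun_fls" "b \<noteq> 0" "x = a + b * s"
    using assms unfolding quad_irrational_def by blast
  have "sigma s x = a + (- b) * s" using sigma_add_mult[OF ab(1,2)] ab by simp
  then show ?thesis unfolding quad_irrational_def using ab ratfun_fls_uminus by fastforce
qed

lemma
  assumes "quad_irrational s x" and "p \<in> ratfun_fls"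
  shows quad_irrational_diff_ratfun: "quad_irrational s (x - p)"
    and sigma_diff_ratfun: "sigma s (x - p) = sigma s x - p"
proof -
  obtain a b where ab: "a \<in> ratfun_fls" "b \<in> ratfun_fls" "b \<noteq> 0" "x = a + b * s"
    using assms unfolding quad_irrational_def by blast
  have x_p: "x - p = (a - p) + b * s" using ab by simp
  have a_p: "a - p \<in> ratfun_fls" using ab assms(2) ratfun_fls_diff by blast
  show "quad_irrational s (x - p)" unfolding quad_irrational_def using x_p a_p ab by blast
  have "sigma s (x - p) = (a - p) - b * s"
    unfolding x_p by (rule sigma_add_mult[OF a_p ab(2)])
  also have "\<dots> = sigma s x - p"
    unfolding ab(4) sigma_add_mult[OF ab(1,2)] by simp
  finally show "sigma s (x - p) = sigma s x - p" .
qed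

lemma sigma_mult_ratfun:
  assumes "quad_irrational s x" and "c \<in> ratfun_fls"
  shows "sigma s (c * x) = c * sigma s x"
proof -
  obtain a b where ab: "a \<in> ratfun_fls" "b \<in> ratfun_fls" "x = a + b * s"
    using assms unfolding quad_irrational_def by blast
  have c_x: "c * x = (c * a) + (c * b) * s" using ab by (simp add: algebra_simps)
  have "sigma s (c * x) = c * a - (c * b) * s"
    unfolding c_x by (rule sigma_add_mult) (use ab assms(2) ratfun_fls_mult in auto)
  also have "\<dots> = c * sigma s x"
    unfolding ab(3) sigma_add_mult[OF ab(1,2)] by (simp add: algebra_simps)
  finally show ?thesis .
qed

lemma
  assumes "s * s \<in> ratfun_fls" and "quad_irrational s x"
  shows quad_irrational_inverse: "quad_irrational s (inverse x)"
    and sigma_inverse: "sigma s (inverse x) = inverse (sigma s x)"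
proof -
  obtain a b where ab: "a \<in> ratfun_fls" "b \<in> ratfun_fls" "b \<noteq> 0" "x = a + b * s"
    using assms(2) unfolding quad_irrational_def by blast
  have sigma_x: "sigma s x = a - b * s" using sigma_add_mult[OF ab(1,2)] ab by simp
  have nonzero: "x \<noteq> 0" "sigma s x \<noteq> 0"
    using quad_irrational_nonzero quad_irrational_sigma assms(2) by auto
  define N where "N = a * a - b * b * (s * s)"
  have N_ratfun: "N \<in> ratfun_fls"
    unfolding N_def using ab assms(1) by (simp add: ratfun_fls_diff ratfun_fls_mult)
  have N_norm: "N = x * sigma s x" unfolding N_def sigma_x by (simp add: ab(4) algebra_simps)
  then have "N \<noteq> 0" using nonzero by simp
  have inv_x: "inverse x = a / N + (- b / N) * s"
    using N_norm \<open>N \<noteq> 0\<close> nonzero unfolding sigma_x by (simp add: field_simps)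
  have coords: "a / N \<in> ratfun_fls" "- b / N \<in> ratfun_fls" "- b / N \<noteq> 0"
    using ab N_ratfun \<open>N \<noteq> 0\<close> by (auto intro: ratfun_fls_divide ratfun_fls_uminus)
  show "quad_irrational s (inverse x)" unfolding quad_irrational_def using inv_x coords by blast
  have "sigma s (inverse x) = (a + b * s) / N"
    unfolding inv_x sigma_add_mult[OF coords(1,2)] by (simp add: add_divide_distrib)
  also have "\<dots> = inverse (sigma s x)"
    using N_norm \<open>N \<noteq> 0\<close> nonzero ab(4) by (simp add: field_simps)
  finally show "sigma s (inverse x) = inverse (sigma s x)" .
qed

end

subsection \<open>Continued fractions of \<open>\<sigma>\<close>-reduced quadratic irrationals\<close>

text \<open>The difference of the two expansions gains order at every step.\<close>

lemma cf_expansion_unique_if_bounded: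
  fixes X Y a :: "nat \<Rightarrow> 'a::field fls"
  assumes X_eq: "\<And>k. X k = a k + inverse (X (Suc k))"
    and Y_eq: "\<And>k. Y k = a k + inverse (Y (Suc k))"
    and X_neg: "\<And>k. ord_neg (X k)" and Y_neg: "\<And>k. ord_neg (Y k)"
    and X_bound: "\<And>k. M \<le> fls_subdegree (X k)" and Y_bound: "\<And>k. M \<le> fls_subdegree (Y k)"
  shows "X = Y"
proof (rule ext, rule ccontr)
  define \<delta> where "\<delta> k = X k - Y k" for k
  have nonzero: "X k \<noteq> 0" "Y k \<noteq> 0" for k
    using X_neg Y_neg ord_neg_imp_nonzero by auto
  have step: "\<delta> (Suc k) \<noteq> 0 \<and> fls_subdegree (\<delta> (Suc k)) < fls_subdegree (\<delta> k)"
    if "\<delta> k \<noteq> 0" for k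
  proof -
    have "\<delta> k = inverse (X (Suc k)) - inverse (Y (Suc k))"
      unfolding \<delta>_def using X_eq[of k] Y_eq[of k] by simp
    also have "\<dots> = - \<delta> (Suc k) * inverse (X (Suc k) * Y (Suc k))"
      using nonzero[of "Suc k"] by (simp add: \<delta>_def field_simps)
    finally have \<delta>_eq: "\<delta> k = - \<delta> (Suc k) * inverse (X (Suc k) * Y (Suc k))" .
    then have "\<delta> (Suc k) \<noteq> 0" using that by auto
    moreover have "fls_subdegree (X (Suc k)) < 0" "fls_subdegree (Y (Suc k)) < 0"
      using X_neg Y_neg by (auto simp: ord_neg_def)
    ultimately show ?thesis
      using nonzero[of "Suc k"]
      by (simp add: \<delta>_eq fls_subdegree_mult fls_inverse_subdegree)
  qed
  have lower: "M \<le> fls_subdegree (\<delta> k)" if "\<delta> k \<noteq> 0" for k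
  proof (rule fls_subdegree_geI[OF that])
    fix i assume "i < M"
    then show "fls_nth (\<delta> k) i = 0"
      using X_bound[of k] Y_bound[of k] by (simp add: \<delta>_def)
  qed
  fix k assume "X k \<noteq> Y k"
  then have "\<delta> k \<noteq> 0" by (simp add: \<delta>_def)
  have descent: "\<delta> (k + j) \<noteq> 0 \<and> fls_subdegree (\<delta> (k + j)) + int j \<le> fls_subdegree (\<delta> k)" for j
    by (induction j) (use \<open>\<delta> k \<noteq> 0\<close> step in \<open>fastforce+\<close>)
  define j where "j = nat (fls_subdegree (\<delta> k) - M) + 1"
  show False
    using descent[of j] lower[of "k + j"] unfolding j_def by linarith
qed

declare cf_alpha.simps(2) [simp del]

locale sigma_reduced_cf =
  fixes s \<alpha> :: "'a::field fls"
  assumes sqrt_irr: "s \<notin> ratfun_fls" and square_ratfun: "s * s \<in> ratfun_fls"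
    and quad_irr: "quad_irrational s \<alpha>" and reduced: "sigma_reduced s \<alpha>"
begin

abbreviation A :: "nat \<Rightarrow> 'a fls" where "A \<equiv> cf_alpha \<alpha>"
abbreviation a :: "nat \<Rightarrow> 'a fls" where "a \<equiv> cf_a \<alpha>"

lemma cf_a_ratfun: "a n \<in> ratfun_fls"
  unfolding cf_a_def using polys_fls_subset_ratfun_fls fls_floor_in_polys by blast

lemma cf_alpha_Suc_eq: "A (Suc n) = inverse (A n - a n)"
  unfolding cf_a_def by (rule cf_alpha.simps(2))

lemma cf_alpha_quad_irrational_sigma_reduced:
  "quad_irrational s (A n) \<and> sigma_reduced s (A n)"
proof (induction n)
  case 0
  then show ?case using quad_irr reduced by simp
next
  case (Suc n)
  then have irr: "quad_irrational s (A n - a n)"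
    and sigma_frac: "sigma s (A n - a n) = sigma s (A n) - a n"
    using quad_irrational_diff_ratfun[OF sqrt_irr] sigma_diff_ratfun[OF sqrt_irr] cf_a_ratfun
    by auto
  have "ord_pos (A n - a n)" unfolding cf_a_def by (rule ord_pos_minus_fls_floor)
  then have "ord_neg (A (Suc n))"
    unfolding cf_alpha_Suc_eq using quad_irrational_nonzero[OF sqrt_irr irr] by (rule ord_neg_inverse)
  moreover have "ord_neg (sigma s (A n) - a n)"
    using Suc ord_neg_diff_ord_pos ord_neg_fls_floor unfolding sigma_reduced_def cf_a_def
    by blast
  then have "ord_pos (sigma s (A (Suc n)))"
    unfolding cf_alpha_Suc_eq sigma_inverse[OF sqrt_irr square_ratfun irr] sigma_frac
    by (rule ord_pos_inverse)
  ultimately show ?case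
    using quad_irrational_inverse[OF sqrt_irr square_ratfun irr]
    by (simp add: cf_alpha_Suc_eq sigma_reduced_def)
qed

lemma quad_irrational_cf_alpha: "quad_irrational s (A n)"
  using cf_alpha_quad_irrational_sigma_reduced by blast

lemma ord_neg_cf_alpha: "ord_neg (A n)"
  using cf_alpha_quad_irrational_sigma_reduced by (simp add: sigma_reduced_def)

lemma ord_pos_sigma_cf_alpha: "ord_pos (sigma s (A n))"
  using cf_alpha_quad_irrational_sigma_reduced by (simp add: sigma_reduced_def)

lemma sigma_cf_alpha_nonzero: "sigma s (A n) \<noteq> 0"
  using quad_irrational_nonzero[OF sqrt_irr] quad_irrational_sigma[OF sqrt_irr]
    quad_irrational_cf_alpha by blast

lemma cf_a_nonzero: "a n \<noteq> 0"
  unfolding cf_a_def using ord_neg_cf_alpha ord_neg_fls_floor ord_neg_imp_nonzero by blast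

lemma fls_subdegree_cf_alpha: "fls_subdegree (A n) = fls_subdegree (a n)"
  unfolding cf_a_def using fls_subdegree_fls_floor[OF ord_neg_cf_alpha] by simp

lemma quad_irrational_cf_alpha_diff_cf_a: "quad_irrational s (A n - a n)"
  using quad_irrational_diff_ratfun[OF sqrt_irr quad_irrational_cf_alpha cf_a_ratfun] .

lemma cf_alpha_eq: "A n = a n + inverse (A (Suc n))"
  using quad_irrational_nonzero[OF sqrt_irr quad_irrational_cf_alpha_diff_cf_a]
  by (simp add: cf_alpha_Suc_eq)

lemma sigma_cf_alpha_Suc: "sigma s (A (Suc n)) = inverse (sigma s (A n) - a n)"
  unfolding cf_alpha_Suc_eq
  by (simp add: sigma_inverse[OF sqrt_irr square_ratfun quad_irrational_cf_alpha_diff_cf_a]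
      sigma_diff_ratfun[OF sqrt_irr quad_irrational_cf_alpha cf_a_ratfun])

definition rev_quotient :: "nat \<Rightarrow> 'a fls" where
  "rev_quotient n = - inverse (sigma s (A n))"

lemma rev_quotient_Suc: "rev_quotient (Suc n) = a n - sigma s (A n)"
proof -
  have "sigma s (A n) - a n \<noteq> 0"
    using quad_irrational_nonzero[OF sqrt_irr quad_irrational_sigma[OF sqrt_irr]]
      quad_irrational_cf_alpha_diff_cf_a
      sigma_diff_ratfun[OF sqrt_irr quad_irrational_cf_alpha cf_a_ratfun]
    by metis
  then show ?thesis unfolding rev_quotient_def sigma_cf_alpha_Suc by simp
qed

lemma rev_quotient_Suc_eq: "rev_quotient (Suc n) = a n + inverse (rev_quotient n)"
  unfolding rev_quotient_Suc using sigma_cf_alpha_nonzero[of n] by (simp add: rev_quotient_def)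

lemma fls_floor_rev_quotient_Suc: "fls_floor (rev_quotient (Suc n)) = a n"
  unfolding rev_quotient_Suc fls_floor_diff fls_floor_eq_0[OF ord_pos_sigma_cf_alpha]
  by (simp add: cf_a_def fls_floor_polys[OF fls_floor_in_polys])

lemma cf_alpha_1_eq_rev_quotient_0:
  assumes "\<alpha> + sigma s \<alpha> \<in> polys_fls"
  shows "A 1 = rev_quotient 0"
proof -
  have "a 0 = fls_floor (\<alpha> + sigma s \<alpha>) - fls_floor (sigma s \<alpha>)"
    unfolding cf_a_def fls_floor_diff[symmetric] by simp
  also have "\<dots> = \<alpha> + sigma s \<alpha>"
    using fls_floor_eq_0[OF ord_pos_sigma_cf_alpha[of 0]] by (simp add: fls_floor_polys[OF assms])
  finally have "A 0 - a 0 = - sigma s (A 0)" by simp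
  then show ?thesis
    using cf_alpha_Suc_eq[of 0] by (simp add: rev_quotient_def inverse_minus_eq)
qed

end

subsection \<open>Quasi-periodic expansions\<close>

locale quasi_periodic_cf = sigma_reduced_cf +
  fixes \<mu> :: 'a and l m :: nat
  assumes mu_nonzero: "\<mu> \<noteq> 0" and period_pos: "1 \<le> l"
    and cf_a_quasi_periodic_from:
      "\<And>n. m \<le> n \<Longrightarrow> cf_a \<alpha> n = fls_const (\<mu> powi ((-1) ^ n)) * cf_a \<alpha> (n + l)"
begin

definition mu_pow :: "nat \<Rightarrow> 'a fls" where
  "mu_pow n = fls_const (\<mu> powi ((-1) ^ n))"

lemma mu_pow_nonzero: "mu_pow n \<noteq> 0"
  using mu_nonzero by (simp add: mu_pow_def)

lemma mu_pow_Suc: "mu_pow (Suc n) = inverse (mu_pow n)"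
  by (simp add: mu_pow_def fls_inverse_const power_int_minus)

lemma mu_pow_add: "mu_pow (n + k) = (if even k then mu_pow n else inverse (mu_pow n))"
  by (induction k) (simp_all add: mu_pow_Suc)

lemma mu_pow_ratfun: "mu_pow n \<in> ratfun_fls"
  unfolding mu_pow_def by (rule ratfun_fls_const)

lemma fls_floor_mu_pow_mult: "fls_floor (mu_pow n * f) = mu_pow n * fls_floor f"
  unfolding mu_pow_def by (rule fls_floor_const_mult)

lemma fls_subdegree_mu_pow_mult: "fls_subdegree (mu_pow n * f) = fls_subdegree f"
  unfolding mu_pow_def using mu_nonzero by (simp add: fls_subdegree_const_mult)

lemma fls_subdegree_cf_alpha_bounded: "\<exists>M. \<forall>k. M \<le> fls_subdegree (A k)"
proof -
  define M where "M = Min ((\<lambda>j. fls_subdegree (A j)) ` {..<m + l})"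
  have "M \<le> fls_subdegree (A k)" for k
  proof (induction k rule: less_induct)
    case (less k)
    show ?case
    proof (cases "k < m + l")
      case True
      then show ?thesis unfolding M_def by (intro Min_le) auto
    next
      case False
      then have "m \<le> k - l" "k - l < k" "k - l + l = k" using period_pos by auto
      then have "fls_subdegree (A (k - l)) = fls_subdegree (A k)"
        using cf_a_quasi_periodic_from[folded mu_pow_def, of "k - l"]
        by (simp add: fls_subdegree_cf_alpha fls_subdegree_mu_pow_mult)
      then show ?thesis using less.IH[of "k - l"] \<open>k - l < k\<close> by simp
    qed
  qed
  then show ?thesis by blast
qed

lemma mu_pow_cf_alpha_eq:
  assumes "m \<le> n"
  shows "mu_pow n * A (n + l) = a n + inverse (mu_pow (Suc n) * A (Suc n + l))"
proof -
  have "mu_pow n * A (n + l) = mu_pow n * a (n + l) + mu_pow n * inverse (A (Suc n + l))"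
    using cf_alpha_eq[of "n + l"] by (simp add: distrib_left)
  also have "\<dots> = a n + inverse (mu_pow (Suc n) * A (Suc n + l))"
    using cf_a_quasi_periodic_from[folded mu_pow_def, OF assms]
    by (simp add: mu_pow_Suc inverse_mult_distrib)
  finally show ?thesis .
qed

lemma cf_alpha_quasi_periodic_from:
  assumes "m \<le> n"
  shows "A n = mu_pow n * A (n + l)"
proof -
  obtain M where M: "\<And>k. M \<le> fls_subdegree (A k)"
    using fls_subdegree_cf_alpha_bounded by blast
  have "(\<lambda>k. A (m + k)) = (\<lambda>k. mu_pow (m + k) * A (m + k + l))"
  proof (rule cf_expansion_unique_if_bounded[where a = "\<lambda>k. a (m + k)" and M = M])
    show "A (m + k) = a (m + k) + inverse (A (m + Suc k))" for k
      using cf_alpha_eq[of "m + k"] by simp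
    show "mu_pow (m + k) * A (m + k + l)
        = a (m + k) + inverse (mu_pow (m + Suc k) * A (m + Suc k + l))" for k
      using mu_pow_cf_alpha_eq[of "m + k"] by simp
    show "ord_neg (A (m + k))" for k by (rule ord_neg_cf_alpha)
    show "ord_neg (mu_pow (m + k) * A (m + k + l))" for k
      using ord_neg_cf_alpha[of "m + k + l"] mu_pow_nonzero[of "m + k"]
      by (simp add: ord_neg_def fls_subdegree_mu_pow_mult)
    show "M \<le> fls_subdegree (A (m + k))" for k by (rule M)
    show "M \<le> fls_subdegree (mu_pow (m + k) * A (m + k + l))" for k
      using M by (simp add: fls_subdegree_mu_pow_mult)
  qed
  from fun_cong[OF this, of "n - m"] show ?thesis using assms by simp
qed

text \<open>The quasi-periodicity relation propagates backwards through the reversed expansion.\<close>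

lemma cf_alpha_quasi_periodic_Suc_imp:
  assumes "A (Suc n) = mu_pow (Suc n) * A (Suc n + l)"
  shows "A n = mu_pow n * A (n + l)"
proof -
  have shifted: "A (Suc n + l) = mu_pow n * A (Suc n)"
    unfolding assms mu_pow_Suc using mu_pow_nonzero[of n] by simp
  have "rev_quotient (Suc n + l) = mu_pow (Suc n) * rev_quotient (Suc n)"
    unfolding rev_quotient_def shifted
      sigma_mult_ratfun[OF sqrt_irr quad_irrational_cf_alpha mu_pow_ratfun]
    by (simp add: mu_pow_Suc inverse_mult_distrib)
  then have a_shifted: "a (n + l) = mu_pow (Suc n) * a n"
    using fls_floor_rev_quotient_Suc[of "n + l"] fls_floor_rev_quotient_Suc[of n]
    by (simp add: fls_floor_mu_pow_mult)
  have "A (n + l) = a (n + l) + inverse (A (Suc n + l))"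
    using cf_alpha_eq[of "n + l"] by simp
  also have "\<dots> = mu_pow (Suc n) * (a n + inverse (A (Suc n)))"
    unfolding a_shifted shifted by (simp add: mu_pow_Suc inverse_mult_distrib distrib_left)
  also have "a n + inverse (A (Suc n)) = A n" by (rule cf_alpha_eq[symmetric])
  finally show ?thesis using mu_pow_nonzero[of n] by (simp add: mu_pow_Suc)
qed

lemma cf_alpha_quasi_periodic: "A n = mu_pow n * A (n + l)"
proof (induction "m - n" arbitrary: n)
  case 0
  then show ?case by (intro cf_alpha_quasi_periodic_from) simp
next
  case (Suc d)
  then have "d = m - Suc n" by simp
  then show ?case by (rule cf_alpha_quasi_periodic_Suc_imp[OF Suc.hyps(1)])
qed

lemma cf_a_quasi_periodic: "a n = mu_pow n * a (n + l)"
  unfolding cf_a_def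
  by (simp only: cf_alpha_quasi_periodic[of n] fls_floor_mu_pow_mult)

lemma rev_quotient_period_reflect:
  assumes trace: "\<alpha> + sigma s \<alpha> \<in> polys_fls" and "Suc j < l"
  shows "rev_quotient (l - j) = mu_pow j * A (Suc j)"
  using \<open>Suc j < l\<close>
proof (induction j)
  case 0
  have A_l: "A l = mu_pow 1 * A 0"
    using cf_alpha_quasi_periodic[of 0] mu_pow_nonzero[of 0] by (simp add: mu_pow_Suc field_simps)
  have "sigma s (A l) = mu_pow 1 * sigma s (A 0)"
    unfolding A_l
    by (rule sigma_mult_ratfun[OF sqrt_irr quad_irrational_cf_alpha mu_pow_ratfun])
  then have "rev_quotient l = mu_pow 0 * rev_quotient 0"
    by (simp add: rev_quotient_def mu_pow_Suc inverse_mult_distrib)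
  then show ?case using cf_alpha_1_eq_rev_quotient_0[OF trace] by simp
next
  case (Suc j)
  define k where "k = l - Suc j"
  have l_j: "l - j = Suc k" using Suc.prems unfolding k_def by simp
  have IH: "rev_quotient (Suc k) = mu_pow j * A (Suc j)" using Suc l_j by simp
  have "a k = mu_pow j * a (Suc j)"
    using fls_floor_rev_quotient_Suc[of k] unfolding IH fls_floor_mu_pow_mult cf_a_def by simp
  then have "inverse (rev_quotient k) = mu_pow j * (A (Suc j) - a (Suc j))"
    using rev_quotient_Suc_eq[of k] IH by (simp add: algebra_simps)
  also have "A (Suc j) - a (Suc j) = inverse (A (Suc (Suc j)))"
    using cf_alpha_eq[of "Suc j"] by simp
  finally have "rev_quotient k = inverse (mu_pow j * inverse (A (Suc (Suc j))))"
    by (metis inverse_inverse_eq)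
  then have "rev_quotient k = mu_pow (Suc j) * A (Suc (Suc j))"
    by (simp add: mu_pow_Suc inverse_mult_distrib)
  then show ?case unfolding k_def by simp
qed

lemma mu_eq_1_if_even_period:
  assumes trace: "\<alpha> + sigma s \<alpha> \<in> polys_fls" and "even l"
  shows "\<mu> = 1"
proof -
  define h where "h = l div 2"
  have h: "Suc (h - 1) = h" "h < l" "l - (h - 1) = Suc h"
    using \<open>even l\<close> period_pos unfolding h_def by (auto elim: evenE)
  have "rev_quotient (Suc h) = mu_pow (h - 1) * A h"
    using rev_quotient_period_reflect[OF trace, of "h - 1"] h by simp
  then have "a h = mu_pow (h - 1) * a h"
    using fls_floor_rev_quotient_Suc[of h] by (simp add: fls_floor_mu_pow_mult cf_a_def)
  then have "(mu_pow (h - 1) - 1) * a h = 0" by (simp add: algebra_simps)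
  then have "mu_pow (h - 1) = 1" using cf_a_nonzero[of h] by simp
  then have "fls_nth (mu_pow (h - 1)) 0 = 1" by simp
  then have "\<mu> powi ((-1) ^ (h - 1)) = 1" by (simp add: mu_pow_def)
  then show ?thesis by (cases "even (h - 1)") (simp_all add: power_int_minus)
qed

lemma cf_a_periodic:
  assumes trace: "\<alpha> + sigma s \<alpha> \<in> polys_fls"
  shows "\<exists>p\<ge>1. \<forall>n. a n = a (n + p)"
proof (cases "even l")
  case True
  then have "mu_pow n = 1" for n
    using mu_eq_1_if_even_period[OF trace] unfolding mu_pow_def by simp
  then have "a n = a (n + l)" for n using cf_a_quasi_periodic[of n] by simp
  then show ?thesis using period_pos by blast
next
  case False
  have "a n = a (n + 2 * l)" for n
    using cf_a_quasi_periodic[of n] cf_a_quasi_periodic[of "n + l"] mu_pow_nonzero[of n] False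
    by (simp add: mu_pow_add mult_2 add.assoc)
  then show ?thesis using period_pos by (intro exI[of _ "2 * l"]) auto
qed

end

theorem mainTheorem13:
  fixes D :: "'a::field poly" and s \<alpha> :: "'a fls"
  assumes char: "(2::'a) \<noteq> 0"
    and nonsq: "\<not> (\<exists>q. D = q * q)"
    and even_deg: "even (degree D)"
    and lc_sq: "\<exists>c. lead_coeff D = c * c"
    and sqrtD: "s * s = poly_fls D"
    and alpha_in: "\<alpha> \<in> quad_field s"
    and red: "sigma_reduced s \<alpha>"
    and trace: "\<alpha> + sigma s \<alpha> \<in> polys_fls"
    and qp: "quasi_periodic \<alpha>"
  shows "\<exists>l\<ge>1. \<forall>n. cf_a \<alpha> n = cf_a \<alpha> (n + l)"
proof -
  \<comment> \<open>\<open>char\<close>, \<open>even_deg\<close> and \<open>lc_sq\<close> only ensure that \<open>D\<close> has a square root in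
    \<open>K((X\<^sup>-\<^sup>1))\<close>.\<close>
  have sqrt_irr: "s \<notin> ratfun_fls" by (rule sqrt_not_ratfun_fls[OF sqrtD nonsq])
  have "s * s \<in> ratfun_fls" unfolding sqrtD by (rule ratfun_fls_poly)
  moreover have "quad_irrational s \<alpha>"
    by (rule quad_irrational_if_sigma_reduced[OF sqrt_irr alpha_in red])
  moreover obtain m l and \<mu> :: 'a where "1 \<le> l" "\<mu> \<noteq> 0"
    "\<And>n. m \<le> n \<Longrightarrow> cf_a \<alpha> n = fls_const (\<mu> powi ((-1) ^ n)) * cf_a \<alpha> (n + l)"
    using qp unfolding quasi_periodic_def by blast
  ultimately interpret quasi_periodic_cf s \<alpha> \<mu> l m
    using sqrt_irr red by unfold_locales blast+
  show ?thesis by (rule cf_a_periodic[OF trace])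
qed

end
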